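(* Let $H=(\mathcal{V},\mathcal{E})$ be a hypergraph. Let $\chi_{cf}(H)$ be the number of non-zero colours used in an optimal conflict-free colouring of $H$, and let $\chi_{min}=\min_{t}\chi(G_{R,t})$ be the minimum chromatic number over all co-occurrence graphs $G_{R,t}$ of $H$ (over all representative functions $t$, with $R=t(\mathcal{E})$). Then $\chi_{cf}(H)=\chi_{min}$.
   Context: A hypergraph $H=(\mathcal{V},\mathcal{E})$ has a finite vertex set $\mathcal{V}$ and a family $\mathcal{E}$ of nonempty subsets of $\mathcal{V}$ (hyperedges). A conflict-free colouring of $H$ is a function $C:\mathcal{V}\to\mathbb{N}=\{0,1,2,\dots\}$ such that for every hyperedge $E\in\mathcal{E}$ there is a colour $j\geq 1$ with $|E\cap C^{-1}(j)|=1$; colour $0$ is a special "uncoloured" colour and is not counted. $\chi_{cf}(H)$ is the minimum number of non-zero colours used by a conflict-free colouring. A representative function is a map $t:\mathcal{E}\to\mathcal{V}$ with $t(E)\in E$ for every $E$; $R=t(\mathcal{E})$ is its image (the set of representatives). The co-occurrence graph $G_{R,t}$ is the simple graph with vertex set $R$, in which distinct $u,v\in R$ are adjacent if and only if there is a hyperedge $E\in\mathcal{E}$ with $u,v\in E$ and $t(E)\in\{u,v\}$. $\chi(G)$ denotes the chromatic number of a graph $G$. *)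

theory Defs
  imports Main
begin

definition hypergraph :: "'a set \<Rightarrow> 'a set set \<Rightarrow> bool" where
  "hypergraph V E \<longleftrightarrow> finite V \<and> (\<forall>e\<in>E. e \<noteq> {} \<and> e \<subseteq> V)"

text \<open>Conflict-free colouring; colour 0 is the uncoloured colour.\<close>
definition cf_colouring :: "'a set set \<Rightarrow> ('a \<Rightarrow> nat) \<Rightarrow> bool" where
  "cf_colouring E C \<longleftrightarrow> (\<forall>e\<in>E. \<exists>j\<ge>1. card (e \<inter> C -` {j}) = 1)"

definition num_colours :: "'a set \<Rightarrow> ('a \<Rightarrow> nat) \<Rightarrow> nat" where
  "num_colours V C = card (C ` V - {0})"

definition chi_cf :: "'a set \<Rightarrow> 'a set set \<Rightarrow> nat" where
  "chi_cf V E = (LEAST k. \<exists>C. cf_colouring E C \<and> num_colours V C = k)"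

definition representative :: "'a set set \<Rightarrow> ('a set \<Rightarrow> 'a) \<Rightarrow> bool" where
  "representative E t \<longleftrightarrow> (\<forall>e\<in>E. t e \<in> e)"

definition cooc_adj :: "'a set set \<Rightarrow> ('a set \<Rightarrow> 'a) \<Rightarrow> 'a \<Rightarrow> 'a \<Rightarrow> bool" where
  "cooc_adj E t u v \<longleftrightarrow> u \<in> t ` E \<and> v \<in> t ` E \<and> u \<noteq> v \<and>
     (\<exists>e\<in>E. u \<in> e \<and> v \<in> e \<and> t e \<in> {u, v})"

definition chromatic_number :: "'a set \<Rightarrow> ('a \<Rightarrow> 'a \<Rightarrow> bool) \<Rightarrow> nat" where
  "chromatic_number R adj = (LEAST k. \<exists>c :: 'a \<Rightarrow> nat. c ` R \<subseteq> {..<k} \<and>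
      (\<forall>u\<in>R. \<forall>v\<in>R. adj u v \<longrightarrow> c u \<noteq> c v))"

definition chi_min :: "'a set set \<Rightarrow> nat" where
  "chi_min E = (LEAST k. \<exists>t. representative E t \<and> chromatic_number (t ` E) (cooc_adj E t) = k)"

end

theory Submission
  imports Defs
begin

text \<open>
  A conflict-free colouring \<open>C\<close> picks in every hyperedge a vertex whose non-zero colour is
  unique there; taking these vertices as representatives, two vertices adjacent in the
  co-occurrence graph share a hyperedge in which one of them is uniquely coloured, so \<open>C\<close>
  restricted to the representatives is a proper colouring with at most as many colours.
  Conversely, a proper colouring \<open>c\<close> of \<open>G\<^sub>R\<^sub>,\<^sub>t\<close> becomes conflict-free after shifting it
  to the colours \<open>c + 1\<close> on \<open>R\<close> and leaving every other vertex uncoloured: in each hyperedge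
  \<open>e\<close> the representative \<open>t e\<close> is adjacent to every other representative in \<open>e\<close>.
\<close>

definition proper_colouring :: "'a set \<Rightarrow> ('a \<Rightarrow> 'a \<Rightarrow> bool) \<Rightarrow> nat \<Rightarrow> ('a \<Rightarrow> nat) \<Rightarrow> bool" where
  "proper_colouring R adj k c \<longleftrightarrow> c ` R \<subseteq> {..<k} \<and> (\<forall>u\<in>R. \<forall>v\<in>R. adj u v \<longrightarrow> c u \<noteq> c v)"

lemma chromatic_number_eq_Least:
  "chromatic_number R adj = (LEAST k. \<exists>c. proper_colouring R adj k c)"
  by (simp add: chromatic_number_def proper_colouring_def)

lemma chromatic_number_le:
  "proper_colouring R adj k c \<Longrightarrow> chromatic_number R adj \<le> k"
  unfolding chromatic_number_eq_Least by (rule Least_le) blast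

lemma inj_on_nat_below_card:
  assumes "finite S"
  obtains f :: "'b \<Rightarrow> nat" where "inj_on f S" "f ` S \<subseteq> {..<card S}"
  using ex_bij_betw_finite_nat[OF assms] by (auto simp: bij_betw_def atLeast0LessThan)

lemma proper_colouring_card:
  assumes "finite R" and "irreflp adj"
  shows "\<exists>c. proper_colouring R adj (card R) c"
proof -
  obtain f :: "'a \<Rightarrow> nat" where "inj_on f R" "f ` R \<subseteq> {..<card R}"
    using inj_on_nat_below_card[OF assms(1)] .
  then have "proper_colouring R adj (card R) f"
    using assms(2) unfolding proper_colouring_def by (metis inj_on_contraD irreflpD)
  then show ?thesis by blast
qed

lemma chromatic_number_attained:
  assumes "finite R" and "irreflp adj"
  shows "\<exists>c. proper_colouring R adj (chromatic_number R adj) c"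
proof -
  have "\<exists>k c. proper_colouring R adj k c"
    using proper_colouring_card[OF assms] by blast
  then show ?thesis unfolding chromatic_number_eq_Least by (rule LeastI_ex)
qed

lemma hypergraph_finite_edges: "hypergraph V E \<Longrightarrow> finite E"
  unfolding hypergraph_def by (meson Pow_iff finite_Pow_iff finite_subset subsetI)

lemma hypergraph_edge_subset: "hypergraph V E \<Longrightarrow> e \<in> E \<Longrightarrow> e \<subseteq> V"
  unfolding hypergraph_def by blast

lemma hypergraph_has_representative: "hypergraph V E \<Longrightarrow> \<exists>t. representative E t"
  unfolding hypergraph_def representative_def by (metis ex_in_conv someI)

lemma irreflp_cooc_adj: "irreflp (cooc_adj E t)"
  by (simp add: irreflpI cooc_adj_def)

lemma chi_cf_attained:
  assumes "cf_colouring E C"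
  shows "\<exists>C. cf_colouring E C \<and> num_colours V C = chi_cf V E"
proof -
  have "\<exists>k C. cf_colouring E C \<and> num_colours V C = k"
    using assms by blast
  then show ?thesis unfolding chi_cf_def by (rule LeastI_ex)
qed

lemma chi_cf_le: "cf_colouring E C \<Longrightarrow> chi_cf V E \<le> num_colours V C"
  unfolding chi_cf_def by (rule Least_le) blast

lemma chi_min_attained:
  assumes "representative E t"
  shows "\<exists>t. representative E t \<and> chromatic_number (t ` E) (cooc_adj E t) = chi_min E"
proof -
  have "\<exists>k t. representative E t \<and> chromatic_number (t ` E) (cooc_adj E t) = k"
    using assms by blast
  then show ?thesis unfolding chi_min_def by (rule LeastI_ex)
qed

lemma chi_min_le:
  "representative E t \<Longrightarrow> chi_min E \<le> chromatic_number (t ` E) (cooc_adj E t)"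
  unfolding chi_min_def by (rule Least_le) blast

definition shifted_colouring :: "'a set \<Rightarrow> ('a \<Rightarrow> nat) \<Rightarrow> 'a \<Rightarrow> nat" where
  "shifted_colouring R c v = (if v \<in> R then Suc (c v) else 0)"

lemma num_colours_shifted_colouring_le:
  assumes "c ` R \<subseteq> {..<k}"
  shows "num_colours V (shifted_colouring R c) \<le> k"
proof -
  have "shifted_colouring R c ` V - {0} \<subseteq> Suc ` {..<k}"
    using assms by (auto simp: shifted_colouring_def)
  then have "num_colours V (shifted_colouring R c) \<le> card (Suc ` {..<k})"
    unfolding num_colours_def by (intro card_mono) auto
  then show ?thesis by (simp add: card_image)
qed

lemma representative_uniquely_shifted:
  assumes rep: "representative E t" and e: "e \<in> E"
    and c: "proper_colouring (t ` E) (cooc_adj E t) k c"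
  shows "e \<inter> shifted_colouring (t ` E) c -` {Suc (c (t e))} = {t e}"
proof (intro equalityI subsetI)
  have te: "t e \<in> e" using rep e by (simp add: representative_def)
  fix v assume v: "v \<in> e \<inter> shifted_colouring (t ` E) c -` {Suc (c (t e))}"
  then have vR: "v \<in> t ` E" and "c v = c (t e)"
    by (auto simp: shifted_colouring_def split: if_splits)
  moreover have "v \<noteq> t e \<Longrightarrow> cooc_adj E t v (t e)"
    using vR e te v by (auto simp: cooc_adj_def)
  ultimately show "v \<in> {t e}"
    using c e unfolding proper_colouring_def by blast
next
  fix v assume "v \<in> {t e}"
  then show "v \<in> e \<inter> shifted_colouring (t ` E) c -` {Suc (c (t e))}"
    using rep e by (auto simp: representative_def shifted_colouring_def)
qed

lemma cf_colouring_shifted_colouring: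
  assumes "representative E t" and "proper_colouring (t ` E) (cooc_adj E t) k c"
  shows "cf_colouring E (shifted_colouring (t ` E) c)"
  unfolding cf_colouring_def
proof
  fix e assume e: "e \<in> E"
  show "\<exists>j\<ge>1. card (e \<inter> shifted_colouring (t ` E) c -` {j}) = 1"
    using representative_uniquely_shifted[OF assms(1) e assms(2)]
    by (intro exI[of _ "Suc (c (t e))"]) simp
qed

lemma chi_cf_le_chromatic_number:
  assumes H: "hypergraph V E" and rep: "representative E t"
  shows "chi_cf V E \<le> chromatic_number (t ` E) (cooc_adj E t)"
proof -
  obtain c where c: "proper_colouring (t ` E) (cooc_adj E t) (chromatic_number (t ` E) (cooc_adj E t)) c"
    using chromatic_number_attained[OF finite_imageI[OF hypergraph_finite_edges[OF H]] irreflp_cooc_adj] ..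
  have "chi_cf V E \<le> num_colours V (shifted_colouring (t ` E) c)"
    using chi_cf_le[OF cf_colouring_shifted_colouring[OF rep c]] .
  also have "\<dots> \<le> chromatic_number (t ` E) (cooc_adj E t)"
    using c by (intro num_colours_shifted_colouring_le) (simp add: proper_colouring_def)
  finally show ?thesis .
qed

lemma hypergraph_has_cf_colouring:
  assumes H: "hypergraph V E"
  shows "\<exists>C. cf_colouring E C"
proof -
  obtain t where rep: "representative E t"
    using hypergraph_has_representative[OF H] ..
  obtain c where "proper_colouring (t ` E) (cooc_adj E t) (card (t ` E)) c"
    using proper_colouring_card[OF finite_imageI[OF hypergraph_finite_edges[OF H]] irreflp_cooc_adj] ..
  then show ?thesis using cf_colouring_shifted_colouring[OF rep] by blast
qed

definition uniquely_coloured_in :: "('a \<Rightarrow> nat) \<Rightarrow> 'a set \<Rightarrow> 'a \<Rightarrow> bool" where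
  "uniquely_coloured_in C e v \<longleftrightarrow> v \<in> e \<and> C v \<noteq> 0 \<and> (\<forall>w\<in>e. C w = C v \<longrightarrow> w = v)"

definition cf_representative :: "('a \<Rightarrow> nat) \<Rightarrow> 'a set \<Rightarrow> 'a" where
  "cf_representative C e = (SOME v. uniquely_coloured_in C e v)"

lemma uniquely_coloured_cf_representative:
  assumes "cf_colouring E C" and "e \<in> E"
  shows "uniquely_coloured_in C e (cf_representative C e)"
proof -
  obtain j where "j \<ge> 1" "card (e \<inter> C -` {j}) = 1"
    using assms unfolding cf_colouring_def by blast
  then obtain v where "j \<ge> 1" "e \<inter> C -` {j} = {v}"
    by (auto simp: card_1_singleton_iff)
  then have "uniquely_coloured_in C e v"
    unfolding uniquely_coloured_in_def by auto
  then show ?thesis unfolding cf_representative_def by (rule someI)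
qed

lemma representative_cf_representative:
  "cf_colouring E C \<Longrightarrow> representative E (cf_representative C)"
  using uniquely_coloured_cf_representative
  unfolding representative_def uniquely_coloured_in_def by blast

lemma cooc_adj_cf_representative_colours_differ:
  assumes "cf_colouring E C" and "cooc_adj E (cf_representative C) u v"
  shows "C u \<noteq> C v"
proof -
  obtain e where e: "e \<in> E" "u \<in> e" "v \<in> e" "u \<noteq> v" "cf_representative C e \<in> {u, v}"
    using assms(2) unfolding cooc_adj_def by blast
  show ?thesis
    using uniquely_coloured_cf_representative[OF assms(1) e(1)] e(2-5)
    unfolding uniquely_coloured_in_def by (metis insert_iff singletonD)
qed

text \<open>The colours of \<open>C\<close> need not be \<open>1, \<dots>, k\<close>, so they are first renumbered injectively.\<close>

lemma chromatic_number_le_num_colours: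
  assumes H: "hypergraph V E" and cf: "cf_colouring E C"
  shows "chromatic_number (cf_representative C ` E) (cooc_adj E (cf_representative C))
           \<le> num_colours V C"
proof -
  let ?t = "cf_representative C"
  let ?S = "C ` V - {0}"
  have "finite ?S" using H by (simp add: hypergraph_def)
  then obtain f :: "nat \<Rightarrow> nat" where f: "inj_on f ?S" "f ` ?S \<subseteq> {..<card ?S}"
    by (rule inj_on_nat_below_card)
  have colour_in_S: "C v \<in> ?S" if v: "v \<in> ?t ` E" for v
  proof -
    obtain e where e: "e \<in> E" and "v = ?t e" using v by blast
    then have "v \<in> e" "C v \<noteq> 0"
      using uniquely_coloured_cf_representative[OF cf e] by (simp_all add: uniquely_coloured_in_def)
    then show ?thesis using hypergraph_edge_subset[OF H e] by blast
  qed
  have "proper_colouring (?t ` E) (cooc_adj E ?t) (card ?S) (f \<circ> C)"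
    unfolding proper_colouring_def
  proof (intro conjI ballI impI)
    show "(f \<circ> C) ` ?t ` E \<subseteq> {..<card ?S}"
      using f(2) colour_in_S by fastforce
  next
    fix u v assume "u \<in> ?t ` E" "v \<in> ?t ` E" "cooc_adj E ?t u v"
    then have "C u \<noteq> C v" "C u \<in> ?S" "C v \<in> ?S"
      using cooc_adj_cf_representative_colours_differ[OF cf] colour_in_S by blast+
    then show "(f \<circ> C) u \<noteq> (f \<circ> C) v"
      using inj_on_eq_iff[OF f(1)] by simp
  qed
  then show ?thesis unfolding num_colours_def by (rule chromatic_number_le)
qed

theorem theorem1:
  fixes V :: "'a set" and E :: "'a set set"
  assumes "hypergraph V E"
  shows "chi_cf V E = chi_min E"
proof (rule antisym)
  obtain t0 where "representative E t0"
    using hypergraph_has_representative[OF assms] ..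
  then obtain t where t: "representative E t"
    and "chromatic_number (t ` E) (cooc_adj E t) = chi_min E"
    using chi_min_attained by blast
  then show "chi_cf V E \<le> chi_min E"
    using chi_cf_le_chromatic_number[OF assms t] by simp
next
  obtain C0 where "cf_colouring E C0"
    using hypergraph_has_cf_colouring[OF assms] ..
  then obtain C where C: "cf_colouring E C" and "num_colours V C = chi_cf V E"
    using chi_cf_attained by blast
  then show "chi_min E \<le> chi_cf V E"
    using chi_min_le[OF representative_cf_representative[OF C]]
      chromatic_number_le_num_colours[OF assms C] by simp
qed

end
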